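(* Let $L$ be a poset and let $\mathcal P$ be the set of subsets of $L$ which, with the induced order, have a maximum and a minimum. Let $A_{\mathcal P}$ be the algebra with basis $\mathcal P$ and product $P*Q=P\cup Q$ if $1_P=0_Q$, and $P*Q=0$ otherwise. For $P\in\mathcal P$ let $\Delta(P)=(\Delta_\lambda(P),\Delta_\rho(P))\in M(A_{\mathcal P}\otimes A_{\mathcal P})$ be given by $$\Delta_\lambda(P)(Q\otimes R)=\sum_{x\in P_0}(-\infty,x]_P*Q\otimes[x,+\infty)_P*R,\qquad \Delta_\rho(P)(Q\otimes R)=\sum_{x\in P_0}Q*(-\infty,x]_P\otimes R*[x,+\infty)_P .$$ Then for all $P,S\in\mathcal P$, the multipliers $\Delta(P)(S\otimes 1)$ and $(1\otimes S)\Delta(P)$ belong to (the image of) $A_{\mathcal P}\otimes A_{\mathcal P}$ in $M(A_{\mathcal P}\otimes A_{\mathcal P})$.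
   Context: For $P\in\mathcal P$, $1_P$ and $0_P$ denote the maximum and minimum of $P$, and $P_0=P\setminus\{1_P\}$. For $x\in P_0$, $(-\infty,x]_P=\{y\in P: y\le x\}$ and $[x,+\infty)_P=\{y\in P:x\le y\}$ (these lie in $\mathcal P$). The product $*$ is extended bilinearly; it is associative and non-degenerate. For an algebra $B$ with non-degenerate product, $M(B)$ is the multiplier algebra: pairs $(\lambda,\rho)$ of linear maps $B\to B$ with $\lambda(bc)=\lambda(b)c$, $\rho(bc)=b\rho(c)$ and $b\lambda(c)=\rho(b)c$, with product $(\lambda,\rho)(\lambda',\rho')=(\lambda\circ\lambda',\rho'\circ\rho)$ and identity $1=(\mathrm{id},\mathrm{id})$; $B$ embeds in $M(B)$ via $b\mapsto(\lambda_b,\rho_b)$, $\lambda_b(c)=bc$, $\rho_b(c)=cb$. Here $B=A_{\mathcal P}\otimes A_{\mathcal P}$ with componentwise product, $\Delta_\lambda(P),\Delta_\rho(P)$ are extended linearly, and $S\otimes 1$, $1\otimes S$ denote the multipliers acting by $*$-multiplication by $S$ on the first, respectively second, tensor factor. *)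

theory Defs
  imports Main
begin

definition is_max :: "'a::order set \<Rightarrow> 'a \<Rightarrow> bool" where
  "is_max P m \<longleftrightarrow> m \<in> P \<and> (\<forall>y\<in>P. y \<le> m)"

definition is_min :: "'a::order set \<Rightarrow> 'a \<Rightarrow> bool" where
  "is_min P m \<longleftrightarrow> m \<in> P \<and> (\<forall>y\<in>P. m \<le> y)"

definition calP :: "'a::order set \<Rightarrow> 'a set set" where
  "calP L = {P. P \<subseteq> L \<and> (\<exists>m. is_max P m) \<and> (\<exists>m. is_min P m)}"

definition top1 :: "'a::order set \<Rightarrow> 'a" where
  "top1 P = (THE m. is_max P m)"

definition bot0 :: "'a::order set \<Rightarrow> 'a" where
  "bot0 P = (THE m. is_min P m)"

definition Pzero :: "'a::order set \<Rightarrow> 'a set" where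
  "Pzero P = P - {top1 P}"

definition down :: "'a::order set \<Rightarrow> 'a \<Rightarrow> 'a set" where
  "down P x = {y \<in> P. y \<le> x}"

definition up :: "'a::order set \<Rightarrow> 'a \<Rightarrow> 'a set" where
  "up P x = {y \<in> P. x \<le> y}"

text \<open>Elements of A_P \<otimes> A_P over a field 'k: finitely supported coefficient
  functions on the basis P x P.\<close>
type_synonym ('a, 'k) tens = "'a set \<times> 'a set \<Rightarrow> 'k"

definition supp :: "('a, 'k::zero) tens \<Rightarrow> ('a set \<times> 'a set) set" where
  "supp f = {p. f p \<noteq> 0}"

definition inB :: "'a::order set \<Rightarrow> ('a, 'k::zero) tens \<Rightarrow> bool" where
  "inB L f \<longleftrightarrow> finite (supp f) \<and> supp f \<subseteq> calP L \<times> calP L"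

definition single :: "'a set \<times> 'a set \<Rightarrow> ('a, 'k::{zero,one}) tens" where
  "single p = (\<lambda>r. if r = p then 1 else 0)"

text \<open>Product of basis tensors (P1 \<otimes> P2)(Q1 \<otimes> Q2) = (P1*Q1) \<otimes> (P2*Q2),
  where P*Q = P \<union> Q if 1_P = 0_Q and 0 otherwise.\<close>
definition bmul :: "'a::order set \<times> 'a set \<Rightarrow> 'a set \<times> 'a set \<Rightarrow> ('a, 'k::{zero,one}) tens" where
  "bmul p q = (if top1 (fst p) = bot0 (fst q) \<and> top1 (snd p) = bot0 (snd q)
               then single (fst p \<union> fst q, snd p \<union> snd q) else (\<lambda>_. 0))"

definition tmult :: "('a::order, 'k::field) tens \<Rightarrow> ('a, 'k) tens \<Rightarrow> ('a, 'k) tens" where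
  "tmult u v = (\<lambda>r. \<Sum>(p, q) \<in> supp u \<times> supp v. u p * v q * bmul p q r)"

definition fsum :: "('b \<Rightarrow> 'k::comm_monoid_add) \<Rightarrow> 'b set \<Rightarrow> 'k" where
  "fsum f A = sum f {x \<in> A. f x \<noteq> 0}"

definition Delta_l :: "'a::order set \<Rightarrow> ('a, 'k::field) tens \<Rightarrow> ('a, 'k) tens" where
  "Delta_l P w = (\<lambda>r. \<Sum>q \<in> supp w.
      w q * fsum (\<lambda>x. bmul (down P x, up P x) q r) (Pzero P))"

definition Delta_r :: "'a::order set \<Rightarrow> ('a, 'k::field) tens \<Rightarrow> ('a, 'k) tens" where
  "Delta_r P w = (\<lambda>r. \<Sum>q \<in> supp w.
      w q * fsum (\<lambda>x. bmul q (down P x, up P x) r) (Pzero P))"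

text \<open>The multipliers S \<otimes> 1 and 1 \<otimes> S: left and right actions.\<close>
definition lS1 :: "'a::order set \<Rightarrow> ('a, 'k::field) tens \<Rightarrow> ('a, 'k) tens" where
  "lS1 S w = (\<lambda>r. \<Sum>q \<in> supp w.
      w q * (if top1 S = bot0 (fst q) then single (S \<union> fst q, snd q) r else 0))"

definition rS1 :: "'a::order set \<Rightarrow> ('a, 'k::field) tens \<Rightarrow> ('a, 'k) tens" where
  "rS1 S w = (\<lambda>r. \<Sum>q \<in> supp w.
      w q * (if top1 (fst q) = bot0 S then single (fst q \<union> S, snd q) r else 0))"

definition l1S :: "'a::order set \<Rightarrow> ('a, 'k::field) tens \<Rightarrow> ('a, 'k) tens" where
  "l1S S w = (\<lambda>r. \<Sum>q \<in> supp w.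
      w q * (if top1 S = bot0 (snd q) then single (fst q, S \<union> snd q) r else 0))"

definition r1S :: "'a::order set \<Rightarrow> ('a, 'k::field) tens \<Rightarrow> ('a, 'k) tens" where
  "r1S S w = (\<lambda>r. \<Sum>q \<in> supp w.
      w q * (if top1 (snd q) = bot0 S then single (fst q, snd q \<union> S) r else 0))"

definition in_image_B :: "'a::order set \<Rightarrow> (('a, 'k::field) tens \<Rightarrow> ('a, 'k) tens)
    \<Rightarrow> (('a, 'k) tens \<Rightarrow> ('a, 'k) tens) \<Rightarrow> bool" where
  "in_image_B L lam rho \<longleftrightarrow>
     (\<exists>b. inB L b \<and> (\<forall>w. inB L w \<longrightarrow> lam w = tmult b w \<and> rho w = tmult w b))"

end

theory Submission
  imports Defs
begin

(*
  All six operators are linear, so the multipliers are determined by their values on basis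
  tensors Q \<otimes> R. In  \<Delta>_\<lambda>(P)((S \<otimes> 1)(Q \<otimes> R)) = \<Sum>_{x \<in> P_0} ((-\<infinity>,x]_P * S * Q) \<otimes> ([x,+\<infinity>)_P * R)
  the factor (-\<infinity>,x]_P * S vanishes unless x = 0_S, so at most one term survives, and since gluing
  intervals is associative it equals b * (Q \<otimes> R) for the single basis tensor
  b = ((-\<infinity>,0_S]_P \<union> S) \<otimes> [0_S,+\<infinity>)_P  (b = 0 if 0_S \<notin> P_0); the same b serves \<Delta>_\<rho>.
  Symmetrically, (1 \<otimes> S)\<Delta>(P) is multiplication by (-\<infinity>,1_S]_P \<otimes> (S \<union> [1_S,+\<infinity>)_P).
*)

definition lin_ext ::
    "('a set \<times> 'a set \<Rightarrow> ('a, 'k::comm_semiring_1) tens) \<Rightarrow> ('a, 'k) tens \<Rightarrow> ('a, 'k) tens" where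
  "lin_ext K w = (\<lambda>r. \<Sum>q \<in> supp w. w q * K q r)"

lemma supp_single [simp]: "supp (single p :: ('a, 'k::zero_neq_one) tens) = {p}"
  by (auto simp: supp_def single_def)

lemma supp_zero [simp]: "supp (\<lambda>_. 0) = {}"
  by (simp add: supp_def)

lemma lin_ext_single [simp]: "lin_ext K (single p) = K p"
  by (simp add: lin_ext_def fun_eq_iff) (simp add: single_def)

lemma lin_ext_cong: "(\<And>q. q \<in> supp w \<Longrightarrow> K q = K' q) \<Longrightarrow> lin_ext K w = lin_ext K' w"
  unfolding lin_ext_def by (intro ext sum.cong) auto

lemma lin_ext_superset:
  assumes "finite A" "supp w \<subseteq> A"
  shows "lin_ext K w r = (\<Sum>q\<in>A. w q * K q r)"
  unfolding lin_ext_def using assms by (intro sum.mono_neutral_left) (auto simp: supp_def)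

lemma supp_lin_ext: "supp (lin_ext K w) \<subseteq> (\<Union>q\<in>supp w. supp (K q))"
proof
  fix r assume "r \<in> supp (lin_ext K w)"
  then have "(\<Sum>q\<in>supp w. w q * K q r) \<noteq> 0"
    by (simp add: lin_ext_def supp_def)
  then obtain q where "q \<in> supp w" "w q * K q r \<noteq> 0"
    by (meson sum.not_neutral_contains_not_neutral)
  moreover from this(2) have "r \<in> supp (K q)"
    by (auto simp: supp_def)
  ultimately show "r \<in> (\<Union>q\<in>supp w. supp (K q))" by blast
qed

lemma finite_supp_lin_ext:
  "finite (supp w) \<Longrightarrow> (\<And>q. q \<in> supp w \<Longrightarrow> finite (supp (K q)))
    \<Longrightarrow> finite (supp (lin_ext K w))"
  by (rule finite_subset[OF supp_lin_ext]) auto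

lemma lin_ext_lin_ext:
  assumes fin: "finite (supp w)" and fin_K: "\<And>q. q \<in> supp w \<Longrightarrow> finite (supp (K q))"
  shows "lin_ext H (lin_ext K w) = lin_ext (\<lambda>q. lin_ext H (K q)) w"
proof
  fix r
  define C where "C = (\<Union>q\<in>supp w. supp (K q))"
  have "finite C" using fin fin_K by (auto simp: C_def)
  have "lin_ext H (lin_ext K w) r = (\<Sum>p\<in>C. (\<Sum>q\<in>supp w. w q * K q p) * H p r)"
    using lin_ext_superset[OF \<open>finite C\<close> supp_lin_ext[of K w, folded C_def]]
    by (simp add: lin_ext_def)
  also have "\<dots> = (\<Sum>q\<in>supp w. w q * (\<Sum>p\<in>C. K q p * H p r))"
    by (simp add: sum_distrib_left sum_distrib_right mult.assoc sum.swap[of _ C])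
  also have "\<dots> = (\<Sum>q\<in>supp w. w q * lin_ext H (K q) r)"
    by (intro sum.cong refl arg_cong2[where f = "(*)"] lin_ext_superset[symmetric])
      (use fin fin_K in \<open>auto simp: C_def\<close>)
  finally show "lin_ext H (lin_ext K w) r = lin_ext (\<lambda>q. lin_ext H (K q)) w r"
    by (simp add: lin_ext_def)
qed

definition tens_linear :: "(('a, 'k::comm_semiring_1) tens \<Rightarrow> ('a, 'k) tens) \<Rightarrow> bool" where
  "tens_linear F \<longleftrightarrow> (\<forall>q. finite (supp (F (single q))))
     \<and> (\<forall>w. finite (supp w) \<longrightarrow> F w = lin_ext (\<lambda>q. F (single q)) w)"

lemma tens_linearI:
  assumes "\<And>w. F w = lin_ext K w" and "\<And>q. finite (supp (F (single q)))"
  shows "tens_linear F"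
  using assms by (simp add: tens_linear_def)

lemma tens_linearD:
  assumes "tens_linear F"
  shows "finite (supp (F (single q)))"
    and "finite (supp w) \<Longrightarrow> F w = lin_ext (\<lambda>q. F (single q)) w"
  using assms unfolding tens_linear_def by blast+

lemma finite_supp_tens_linear:
  assumes F: "tens_linear F" and w: "finite (supp w)"
  shows "finite (supp (F w))"
  unfolding tens_linearD(2)[OF F w] using w tens_linearD(1)[OF F] by (rule finite_supp_lin_ext)

lemma tens_linear_comp:
  assumes F: "tens_linear F" and G: "tens_linear G"
  shows "tens_linear (\<lambda>w. F (G w))"
  unfolding tens_linear_def
proof (intro conjI allI impI)
  show "finite (supp (F (G (single q))))" for q
    by (intro finite_supp_tens_linear[OF F] tens_linearD(1)[OF G])
  fix w :: "('a, 'b) tens" assume w: "finite (supp w)"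
  have "F (G w) = lin_ext (\<lambda>p. F (single p)) (lin_ext (\<lambda>q. G (single q)) w)"
    using tens_linearD(2)[OF G w] tens_linearD(2)[OF F finite_supp_tens_linear[OF G w]] by simp
  also have "\<dots> = lin_ext (\<lambda>q. lin_ext (\<lambda>p. F (single p)) (G (single q))) w"
    using w tens_linearD(1)[OF G] by (rule lin_ext_lin_ext)
  also have "\<dots> = lin_ext (\<lambda>q. F (G (single q))) w"
    by (intro lin_ext_cong tens_linearD(2)[OF F tens_linearD(1)[OF G], symmetric])
  finally show "F (G w) = lin_ext (\<lambda>q. F (G (single q))) w" .
qed

lemma finite_supp_bmul: "finite (supp (bmul p q :: ('a::order, 'k::zero_neq_one) tens))"
  by (simp add: bmul_def)

lemma tmult_eq_lin_ext_left: "tmult b w = lin_ext (\<lambda>q. lin_ext (\<lambda>p. bmul p q) b) w"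
  unfolding tmult_def lin_ext_def
  by (simp add: sum.cartesian_product[symmetric] sum.swap[of _ "supp b"] sum_distrib_left mult_ac)

lemma tmult_eq_lin_ext_right: "tmult w b = lin_ext (\<lambda>q. lin_ext (\<lambda>p. bmul q p) b) w"
  unfolding tmult_def lin_ext_def
  by (simp add: sum.cartesian_product[symmetric] sum_distrib_left mult_ac)

lemma tens_linear_tmult_left: "finite (supp b) \<Longrightarrow> tens_linear (tmult b)"
  by (rule tens_linearI[OF tmult_eq_lin_ext_left])
    (simp add: tmult_eq_lin_ext_left finite_supp_lin_ext finite_supp_bmul)

lemma tens_linear_tmult_right: "finite (supp b) \<Longrightarrow> tens_linear (\<lambda>w. tmult w b)"
  by (rule tens_linearI[OF tmult_eq_lin_ext_right])
    (simp add: tmult_eq_lin_ext_right finite_supp_lin_ext finite_supp_bmul)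

lemma in_image_BI:
  assumes b: "inB L b" and lam: "tens_linear lam" and rho: "tens_linear rho"
    and lam_basis: "\<And>q. q \<in> calP L \<times> calP L \<Longrightarrow> lam (single q) = tmult b (single q)"
    and rho_basis: "\<And>q. q \<in> calP L \<times> calP L \<Longrightarrow> rho (single q) = tmult (single q) b"
  shows "in_image_B L lam rho"
  unfolding in_image_B_def
proof (intro exI[of _ b] conjI allI impI b)
  fix w :: "('a, 'b) tens" assume w: "inB L w"
  then have fin: "finite (supp w)" and basis: "\<And>q. q \<in> supp w \<Longrightarrow> q \<in> calP L \<times> calP L"
    by (auto simp: inB_def)
  have fin_b: "finite (supp b)" using b by (simp add: inB_def)
  have "lam w = lin_ext (\<lambda>q. lam (single q)) w"
    by (rule tens_linearD(2)[OF lam fin])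
  also have "\<dots> = lin_ext (\<lambda>q. tmult b (single q)) w"
    by (rule lin_ext_cong) (simp add: lam_basis basis)
  also have "\<dots> = tmult b w"
    by (rule tens_linearD(2)[OF tens_linear_tmult_left[OF fin_b] fin, symmetric])
  finally show "lam w = tmult b w" .
  have "rho w = lin_ext (\<lambda>q. rho (single q)) w"
    by (rule tens_linearD(2)[OF rho fin])
  also have "\<dots> = lin_ext (\<lambda>q. tmult (single q) b) w"
    by (rule lin_ext_cong) (simp add: rho_basis basis)
  also have "\<dots> = tmult w b"
    by (rule tens_linearD(2)[OF tens_linear_tmult_right[OF fin_b] fin, symmetric])
  finally show "rho w = tmult w b" .
qed

lemma tmult_single_single [simp]: "tmult (single p) (single q) = (bmul p q :: ('a::order, 'k::field) tens)"
  by (simp add: tmult_def fun_eq_iff) (simp add: single_def)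

lemma tmult_zero_left [simp]: "tmult (\<lambda>_. 0) w = (\<lambda>_. 0)"
  and tmult_zero_right [simp]: "tmult w (\<lambda>_. 0) = (\<lambda>_. 0)"
  by (simp_all add: tmult_def)

lemma inB_if_single:
  "(c \<Longrightarrow> p \<in> calP L \<times> calP L)
    \<Longrightarrow> inB L (if c then single p else (\<lambda>_. 0) :: ('a::order, 'k::zero_neq_one) tens)"
  by (simp add: inB_def)

lemma Delta_l_eq_lin_ext:
  "Delta_l P = lin_ext (\<lambda>q r. fsum (\<lambda>x. bmul (down P x, up P x) q r) (Pzero P))"
  by (simp add: Delta_l_def lin_ext_def fun_eq_iff)

lemma Delta_r_eq_lin_ext:
  "Delta_r P = lin_ext (\<lambda>q r. fsum (\<lambda>x. bmul q (down P x, up P x) r) (Pzero P))"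
  by (simp add: Delta_r_def lin_ext_def fun_eq_iff)

lemma lS1_eq_lin_ext:
  "lS1 S = lin_ext (\<lambda>q r. if top1 S = bot0 (fst q) then single (S \<union> fst q, snd q) r else 0)"
  by (simp add: lS1_def lin_ext_def fun_eq_iff)

lemma rS1_eq_lin_ext:
  "rS1 S = lin_ext (\<lambda>q r. if top1 (fst q) = bot0 S then single (fst q \<union> S, snd q) r else 0)"
  by (simp add: rS1_def lin_ext_def fun_eq_iff)

lemma l1S_eq_lin_ext:
  "l1S S = lin_ext (\<lambda>q r. if top1 S = bot0 (snd q) then single (fst q, S \<union> snd q) r else 0)"
  by (simp add: l1S_def lin_ext_def fun_eq_iff)

lemma r1S_eq_lin_ext:
  "r1S S = lin_ext (\<lambda>q r. if top1 (snd q) = bot0 S then single (fst q, snd q \<union> S) r else 0)"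
  by (simp add: r1S_def lin_ext_def fun_eq_iff)

lemma Delta_l_zero [simp]: "Delta_l P (\<lambda>_. 0) = (\<lambda>_. 0)"
  and Delta_r_zero [simp]: "Delta_r P (\<lambda>_. 0) = (\<lambda>_. 0)"
  and rS1_zero [simp]: "rS1 S (\<lambda>_. 0) = (\<lambda>_. 0)"
  and l1S_zero [simp]: "l1S S (\<lambda>_. 0) = (\<lambda>_. 0)"
  by (simp_all add: Delta_l_def Delta_r_def rS1_def l1S_def)

lemma lS1_single: "lS1 S (single (Q, R)) = (if top1 S = bot0 Q then single (S \<union> Q, R) else (\<lambda>_. 0))"
  and rS1_single: "rS1 S (single (Q, R)) = (if top1 Q = bot0 S then single (Q \<union> S, R) else (\<lambda>_. 0))"
  and l1S_single: "l1S S (single (Q, R)) = (if top1 S = bot0 R then single (Q, S \<union> R) else (\<lambda>_. 0))"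
  and r1S_single: "r1S S (single (Q, R)) = (if top1 R = bot0 S then single (Q, R \<union> S) else (\<lambda>_. 0))"
  by (auto simp: lS1_eq_lin_ext rS1_eq_lin_ext l1S_eq_lin_ext r1S_eq_lin_ext)

lemma tens_linear_lS1: "tens_linear (lS1 S)"
  and tens_linear_rS1: "tens_linear (rS1 S)"
  and tens_linear_l1S: "tens_linear (l1S S)"
  and tens_linear_r1S: "tens_linear (r1S S)"
  by (rule tens_linearI[OF fun_cong[OF lS1_eq_lin_ext]] tens_linearI[OF fun_cong[OF rS1_eq_lin_ext]]
      tens_linearI[OF fun_cong[OF l1S_eq_lin_ext]] tens_linearI[OF fun_cong[OF r1S_eq_lin_ext]];
      auto simp: lS1_single rS1_single l1S_single r1S_single)+

lemma fsum_eq_single: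
  assumes "\<And>x. x \<in> A \<Longrightarrow> x \<noteq> a \<Longrightarrow> f x = 0"
  shows "fsum f A = (if a \<in> A then f a else 0)"
proof -
  have "{x \<in> A. f x \<noteq> 0} = (if a \<in> A \<and> f a \<noteq> 0 then {a} else {})"
    using assms by auto
  then show ?thesis unfolding fsum_def by auto
qed

lemma PzeroD: "x \<in> Pzero P \<Longrightarrow> x \<in> P"
  by (simp add: Pzero_def)

definition Delta_S1 :: "'a::order set \<Rightarrow> 'a set \<Rightarrow> ('a, 'k::zero_neq_one) tens" where
  "Delta_S1 P S = (if bot0 S \<in> Pzero P
     then single (down P (bot0 S) \<union> S, up P (bot0 S)) else (\<lambda>_. 0))"

definition oneS_Delta :: "'a::order set \<Rightarrow> 'a set \<Rightarrow> ('a, 'k::zero_neq_one) tens" where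
  "oneS_Delta P S = (if top1 S \<in> Pzero P
     then single (down P (top1 S), S \<union> up P (top1 S)) else (\<lambda>_. 0))"

context
  fixes L :: "'a::order set"
begin

lemma top1_eqI: "is_max P m \<Longrightarrow> top1 P = m"
  unfolding top1_def by (rule the_equality) (auto simp: is_max_def intro: order.antisym)

lemma bot0_eqI: "is_min P m \<Longrightarrow> bot0 P = m"
  unfolding bot0_def by (rule the_equality) (auto simp: is_min_def intro: order.antisym)

lemma calP_subset: "P \<in> calP L \<Longrightarrow> P \<subseteq> L"
  unfolding calP_def by blast

lemma is_max_top1: "P \<in> calP L \<Longrightarrow> is_max P (top1 P)"
  unfolding calP_def using top1_eqI by blast

lemma is_min_bot0: "P \<in> calP L \<Longrightarrow> is_min P (bot0 P)"
  unfolding calP_def using bot0_eqI by blast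

lemma calPI: "P \<subseteq> L \<Longrightarrow> is_max P a \<Longrightarrow> is_min P b \<Longrightarrow> P \<in> calP L"
  unfolding calP_def by blast

lemma top1_in: "P \<in> calP L \<Longrightarrow> top1 P \<in> P"
  and le_top1: "P \<in> calP L \<Longrightarrow> y \<in> P \<Longrightarrow> y \<le> top1 P"
  and bot0_in: "P \<in> calP L \<Longrightarrow> bot0 P \<in> P"
  and bot0_le: "P \<in> calP L \<Longrightarrow> y \<in> P \<Longrightarrow> bot0 P \<le> y"
  using is_max_top1 is_min_bot0 unfolding is_max_def is_min_def by blast+

lemma
  assumes "P \<in> calP L" "x \<in> P"
  shows down_calP: "down P x \<in> calP L"
    and top1_down [simp]: "top1 (down P x) = x"
    and bot0_down [simp]: "bot0 (down P x) = bot0 P"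
proof -
  have "is_max (down P x) x" "is_min (down P x) (bot0 P)"
    using assms bot0_in bot0_le by (auto simp: is_max_def is_min_def down_def)
  then show "down P x \<in> calP L" "top1 (down P x) = x" "bot0 (down P x) = bot0 P"
    using calP_subset[OF assms(1)] by (auto intro: calPI top1_eqI bot0_eqI simp: down_def)
qed

lemma
  assumes "P \<in> calP L" "x \<in> P"
  shows up_calP: "up P x \<in> calP L"
    and top1_up [simp]: "top1 (up P x) = top1 P"
    and bot0_up [simp]: "bot0 (up P x) = x"
proof -
  have "is_max (up P x) (top1 P)" "is_min (up P x) x"
    using assms top1_in le_top1 by (auto simp: is_max_def is_min_def up_def)
  then show "up P x \<in> calP L" "top1 (up P x) = top1 P" "bot0 (up P x) = x"
    using calP_subset[OF assms(1)] by (auto intro: calPI top1_eqI bot0_eqI simp: up_def)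
qed

lemma
  assumes "A \<in> calP L" "B \<in> calP L" "top1 A = bot0 B"
  shows Un_calP: "A \<union> B \<in> calP L"
    and top1_Un [simp]: "top1 (A \<union> B) = top1 B"
    and bot0_Un [simp]: "bot0 (A \<union> B) = bot0 A"
proof -
  have "is_max (A \<union> B) (top1 B)"
    using assms top1_in le_top1 bot0_in unfolding is_max_def by (metis Un_iff order.trans)
  moreover have "is_min (A \<union> B) (bot0 A)"
    using assms bot0_in bot0_le top1_in unfolding is_min_def by (metis Un_iff order.trans)
  ultimately show "A \<union> B \<in> calP L" "top1 (A \<union> B) = top1 B" "bot0 (A \<union> B) = bot0 A"
    using calP_subset assms by (auto intro: calPI top1_eqI bot0_eqI)
qed

lemma
  assumes "P \<in> calP L" "S \<in> calP L" "bot0 S \<in> P"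
  shows down_bot0_Un_calP: "down P (bot0 S) \<union> S \<in> calP L"
    and top1_down_bot0_Un [simp]: "top1 (down P (bot0 S) \<union> S) = top1 S"
    and bot0_down_bot0_Un [simp]: "bot0 (down P (bot0 S) \<union> S) = bot0 P"
  using assms by (simp_all add: Un_calP down_calP)

lemma
  assumes "P \<in> calP L" "S \<in> calP L" "top1 S \<in> P"
  shows Un_up_top1_calP: "S \<union> up P (top1 S) \<in> calP L"
    and top1_Un_up_top1 [simp]: "top1 (S \<union> up P (top1 S)) = top1 P"
    and bot0_Un_up_top1 [simp]: "bot0 (S \<union> up P (top1 S)) = bot0 S"
  using assms by (simp_all add: Un_calP up_calP)

text \<open>Only the summand with \<open>x = 0\<^sub>Q\<close> can glue \<open>(-\<infinity>, x]\<^sub>P\<close> to \<open>Q\<close>.\<close>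

lemma Delta_l_single:
  assumes P: "P \<in> calP L"
  shows "Delta_l P (single (Q, R)) = (if bot0 Q \<in> Pzero P \<and> top1 P = bot0 R
    then single (down P (bot0 Q) \<union> Q, up P (bot0 Q) \<union> R) else (\<lambda>_. 0))"
proof
  fix r
  have "Delta_l P (single (Q, R)) r = fsum (\<lambda>x. bmul (down P x, up P x) (Q, R) r) (Pzero P)"
    by (simp add: Delta_l_eq_lin_ext)
  also have "\<dots> = (if bot0 Q \<in> Pzero P then bmul (down P (bot0 Q), up P (bot0 Q)) (Q, R) r else 0)"
    using P by (intro fsum_eq_single) (auto simp: bmul_def Pzero_def)
  finally show "Delta_l P (single (Q, R)) r = (if bot0 Q \<in> Pzero P \<and> top1 P = bot0 R
    then single (down P (bot0 Q) \<union> Q, up P (bot0 Q) \<union> R) else (\<lambda>_. 0)) r"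
    using P by (auto simp: bmul_def Pzero_def)
qed

lemma Delta_r_single:
  assumes P: "P \<in> calP L"
  shows "Delta_r P (single (Q, R)) = (if top1 Q = bot0 P \<and> top1 R \<in> Pzero P
    then single (Q \<union> down P (top1 R), R \<union> up P (top1 R)) else (\<lambda>_. 0))"
proof
  fix r
  have "Delta_r P (single (Q, R)) r = fsum (\<lambda>x. bmul (Q, R) (down P x, up P x) r) (Pzero P)"
    by (simp add: Delta_r_eq_lin_ext)
  also have "\<dots> = (if top1 R \<in> Pzero P then bmul (Q, R) (down P (top1 R), up P (top1 R)) r else 0)"
    using P by (intro fsum_eq_single) (auto simp: bmul_def Pzero_def)
  finally show "Delta_r P (single (Q, R)) r = (if top1 Q = bot0 P \<and> top1 R \<in> Pzero P
    then single (Q \<union> down P (top1 R), R \<union> up P (top1 R)) else (\<lambda>_. 0)) r"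
    using P by (auto simp: bmul_def Pzero_def)
qed

lemma tens_linear_Delta_l: "P \<in> calP L \<Longrightarrow> tens_linear (Delta_l P)"
  by (rule tens_linearI[OF fun_cong[OF Delta_l_eq_lin_ext]]) (auto simp: Delta_l_single)

lemma tens_linear_Delta_r: "P \<in> calP L \<Longrightarrow> tens_linear (Delta_r P)"
  by (rule tens_linearI[OF fun_cong[OF Delta_r_eq_lin_ext]]) (auto simp: Delta_r_single)

lemma inB_Delta_S1: "P \<in> calP L \<Longrightarrow> S \<in> calP L \<Longrightarrow> inB L (Delta_S1 P S)"
  unfolding Delta_S1_def
  by (rule inB_if_single) (simp add: Pzero_def down_bot0_Un_calP up_calP)

lemma inB_oneS_Delta: "P \<in> calP L \<Longrightarrow> S \<in> calP L \<Longrightarrow> inB L (oneS_Delta P S)"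
  unfolding oneS_Delta_def
  by (rule inB_if_single) (simp add: Pzero_def Un_up_top1_calP down_calP)

lemma Delta_l_lS1_single:
  assumes P: "P \<in> calP L" and S: "S \<in> calP L" and Q: "Q \<in> calP L"
  shows "Delta_l P (lS1 S (single (Q, R)))
    = (tmult (Delta_S1 P S) (single (Q, R)) :: ('a, 'k::field) tens)"
proof (cases "top1 S = bot0 Q")
  case True
  then show ?thesis
    using P S Q by (auto simp: lS1_single Delta_l_single Delta_S1_def bmul_def Un_assoc Pzero_def
        down_calP)
next
  case False
  then show ?thesis
    using P S by (auto simp: lS1_single Delta_S1_def bmul_def Pzero_def down_calP)
qed

lemma rS1_Delta_r_single:
  assumes P: "P \<in> calP L" and S: "S \<in> calP L" and Q: "Q \<in> calP L"
  shows "rS1 S (Delta_r P (single (Q, R)))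
    = (tmult (single (Q, R)) (Delta_S1 P S) :: ('a, 'k::field) tens)"
proof (cases "top1 Q = bot0 P \<and> top1 R \<in> Pzero P")
  case True
  then have R: "top1 R \<in> P" by (simp add: PzeroD)
  have Delta_r: "Delta_r P (single (Q, R)) = single (Q \<union> down P (top1 R), R \<union> up P (top1 R))"
    using True P by (simp add: Delta_r_single)
  have top: "top1 (Q \<union> down P (top1 R)) = top1 R"
    using True P Q R by (simp add: down_calP)
  show ?thesis
  proof (cases "top1 R = bot0 S")
    case glue: True
    then show ?thesis
      using True P S R top by (simp add: Delta_r rS1_single Delta_S1_def bmul_def Un_assoc)
  next
    case False
    then have "top1 R \<noteq> bot0 (up P (bot0 S))" if "bot0 S \<in> Pzero P"
      using that P by (simp add: PzeroD)
    then show ?thesis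
      using False top by (auto simp: Delta_r rS1_single Delta_S1_def bmul_def)
  qed
next
  case False
  then have "Delta_r P (single (Q, R)) = (\<lambda>_. 0 :: 'k)"
    using P by (auto simp: Delta_r_single)
  moreover have "top1 Q \<noteq> bot0 (down P (bot0 S) \<union> S) \<or> top1 R \<noteq> bot0 (up P (bot0 S))"
    if "bot0 S \<in> Pzero P"
    using False that P S PzeroD[OF that] by auto
  ultimately show ?thesis
    by (auto simp: Delta_S1_def bmul_def)
qed

lemma l1S_Delta_l_single:
  assumes P: "P \<in> calP L" and S: "S \<in> calP L" and R: "R \<in> calP L"
  shows "l1S S (Delta_l P (single (Q, R)))
    = (tmult (oneS_Delta P S) (single (Q, R)) :: ('a, 'k::field) tens)"
proof (cases "bot0 Q \<in> Pzero P \<and> top1 P = bot0 R")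
  case True
  then have Q: "bot0 Q \<in> P" by (simp add: PzeroD)
  have Delta_l: "Delta_l P (single (Q, R)) = single (down P (bot0 Q) \<union> Q, up P (bot0 Q) \<union> R)"
    using True P by (simp add: Delta_l_single)
  have bot: "bot0 (up P (bot0 Q) \<union> R) = bot0 Q"
    using True P Q R by (simp add: up_calP)
  show ?thesis
  proof (cases "top1 S = bot0 Q")
    case glue: True
    have "top1 (S \<union> up P (top1 S)) = top1 P"
      by (rule top1_Un_up_top1[OF P S]) (simp add: glue Q)
    then show ?thesis
      using glue True P S Q bot by (simp add: Delta_l l1S_single oneS_Delta_def bmul_def Un_assoc)
  next
    case False
    then have "top1 (down P (top1 S)) \<noteq> bot0 Q" if "top1 S \<in> Pzero P"
      using that P by (simp add: PzeroD)
    then show ?thesis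
      using False bot by (auto simp: Delta_l l1S_single oneS_Delta_def bmul_def)
  qed
next
  case False
  then have "Delta_l P (single (Q, R)) = (\<lambda>_. 0 :: 'k)"
    using P by (auto simp: Delta_l_single)
  moreover have "top1 (down P (top1 S)) \<noteq> bot0 Q \<or> top1 (S \<union> up P (top1 S)) \<noteq> bot0 R"
    if "top1 S \<in> Pzero P"
    using False that P S PzeroD[OF that] by auto
  ultimately show ?thesis
    by (auto simp: oneS_Delta_def bmul_def)
qed

lemma Delta_r_r1S_single:
  assumes P: "P \<in> calP L" and S: "S \<in> calP L" and R: "R \<in> calP L"
  shows "Delta_r P (r1S S (single (Q, R)))
    = (tmult (single (Q, R)) (oneS_Delta P S) :: ('a, 'k::field) tens)"
proof (cases "top1 R = bot0 S")
  case True
  then show ?thesis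
    using P S R by (auto simp: r1S_single Delta_r_single oneS_Delta_def bmul_def Un_assoc Pzero_def
        up_calP)
next
  case False
  then show ?thesis
    using P S by (auto simp: r1S_single oneS_Delta_def bmul_def Pzero_def up_calP)
qed

end

theorem lemma1p10:
  fixes L :: "'a::order set" and P S :: "'a set"
  assumes "P \<in> calP L" and "S \<in> calP L"
  shows "in_image_B L (\<lambda>w. Delta_l P (lS1 S w) :: ('a, 'k::field) tens) (\<lambda>w. rS1 S (Delta_r P w))
       \<and> in_image_B L (\<lambda>w. l1S S (Delta_l P w) :: ('a, 'k::field) tens) (\<lambda>w. Delta_r P (r1S S w))"
proof
  note P = assms(1) and S = assms(2)
  show "in_image_B L (\<lambda>w. Delta_l P (lS1 S w) :: ('a, 'k) tens) (\<lambda>w. rS1 S (Delta_r P w))"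
  proof (rule in_image_BI[OF inB_Delta_S1[OF P S]])
    show "tens_linear (\<lambda>w. Delta_l P (lS1 S w) :: ('a, 'k) tens)"
      by (rule tens_linear_comp[OF tens_linear_Delta_l[OF P] tens_linear_lS1])
    show "tens_linear (\<lambda>w. rS1 S (Delta_r P w) :: ('a, 'k) tens)"
      by (rule tens_linear_comp[OF tens_linear_rS1 tens_linear_Delta_r[OF P]])
  qed (auto simp: Delta_l_lS1_single[OF P S] rS1_Delta_r_single[OF P S])
  show "in_image_B L (\<lambda>w. l1S S (Delta_l P w) :: ('a, 'k) tens) (\<lambda>w. Delta_r P (r1S S w))"
  proof (rule in_image_BI[OF inB_oneS_Delta[OF P S]])
    show "tens_linear (\<lambda>w. l1S S (Delta_l P w) :: ('a, 'k) tens)"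
      by (rule tens_linear_comp[OF tens_linear_l1S tens_linear_Delta_l[OF P]])
    show "tens_linear (\<lambda>w. Delta_r P (r1S S w) :: ('a, 'k) tens)"
      by (rule tens_linear_comp[OF tens_linear_Delta_r[OF P] tens_linear_r1S])
  qed (auto simp: l1S_Delta_l_single[OF P S] Delta_r_r1S_single[OF P S])
qed

end
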